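(* Let $k\ge2$ and $\beta\in\mathbb R$, and let $P(z_1,\dots,z_k)=\beta\prod_{i=1}^k(1+z_i)+(1-\beta)\big(1+\prod_{i=1}^kz_i\big)$ be the multivariate Ising partition function of the hypergraph consisting of a single hyperedge $\{1,\dots,k\}$ with activity $\beta$. If either $k=2$ and $-1<\beta<1$, or $k\ge3$ and $-\frac{1}{2^{k-1}-1}<\beta<\frac{1}{2^{k-1}\cos^{k-1}(\frac{\pi}{k-1})+1}$, then $P$ has the Lee-Yang property.
   Context: A multilinear polynomial $P(z_1,\dots,z_n)$ has the Lee-Yang property if $P(\lambda_1,\dots,\lambda_n)\neq0$ whenever $|\lambda_i|\ge1$ for all $i$ and $|\lambda_i|>1$ for at least one $i$. *)

theory Defs
  imports "HOL-Analysis.Analysis"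
begin

text \<open>A polynomial in n variables z_1..z_n is represented as a function of
  an assignment z :: nat => complex, using the indices 1..n.\<close>
definition lee_yang :: "nat \<Rightarrow> ((nat \<Rightarrow> complex) \<Rightarrow> complex) \<Rightarrow> bool" where
  "lee_yang n P \<longleftrightarrow>
     (\<forall>w :: nat \<Rightarrow> complex. (\<forall>i\<in>{1..n}. norm (w i) \<ge> 1) \<and> (\<exists>i\<in>{1..n}. norm (w i) > 1)
        \<longrightarrow> P w \<noteq> 0)"

definition ising_edge :: "nat \<Rightarrow> real \<Rightarrow> (nat \<Rightarrow> complex) \<Rightarrow> complex" where
  "ising_edge k \<beta> z =
     complex_of_real \<beta> * (\<Prod>i=1..k. 1 + z i)
     + complex_of_real (1 - \<beta>) * (1 + (\<Prod>i=1..k. z i))"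

end

theory Submission
  imports Defs
begin

text \<open>Pick \<open>j\<close> with \<open>1 < cmod (w j)\<close> and write the polynomial as \<open>w j * X + Y\<close> with \<open>X\<close>, \<open>Y\<close> free
  of \<open>w j\<close>; it suffices that \<open>cmod Y \<le> cmod X\<close> and \<open>X \<noteq> 0\<close>. The Cayley transform
  \<open>u = (w - 1) / (w + 1)\<close> sends the other variables into the closed right half-plane and turns
  \<open>X\<close> and \<open>Y\<close> into a common multiple of \<open>\<Prod>(1 + u i) - c\<close> and \<open>\<Prod>(1 - u i) - c\<close>, where
  \<open>c = - \<beta> 2^(k-1) / (1 - \<beta>)\<close>. Flipping the signs of the \<open>u i\<close> one at a time, a maximum
  principle for affine functions gives \<open>cmod (\<Prod>(1 - u i) - c) \<le> cmod (\<Prod>(1 + u i) - c)\<close> as soon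
  as \<open>\<Prod>(1 + u i)\<close> omits the value \<open>c\<close> on the closed right half-plane, and the bounds on \<open>\<beta>\<close>
  are exactly what makes it omit \<open>c\<close>.\<close>

lemma norm_affine_sq_diff:
  fixes p q r s :: complex and x y :: real
  shows "(cmod (p + q * Complex x y))\<^sup>2 - (cmod (r + s * Complex x y))\<^sup>2
       = ((cmod (p + q * Complex 0 y))\<^sup>2 - (cmod (r + s * Complex 0 y))\<^sup>2)
         + ((cmod q)\<^sup>2 - (cmod s)\<^sup>2) * x\<^sup>2 + 2 * (Re (p * cnj q) - Re (r * cnj s)) * x"
  unfolding cmod_power2 by (simp add: algebra_simps power2_eq_square)

text \<open>A maximum principle for two affine maps: the square-norm difference is the value on the
  imaginary axis plus a nonnegative quadratic in \<open>x = Re u\<close> plus a linear term, and evaluating at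
  the zero of \<open>p + q u\<close>, which lies in the open left half-plane, shows that the linear term has
  nonnegative slope.\<close>

lemma norm_affine_le_on_right_halfplane:
  fixes p q r s u :: complex
  assumes slope: "cmod s \<le> cmod q"
    and axis: "\<And>y. cmod (r + s * Complex 0 y) \<le> cmod (p + q * Complex 0 y)"
    and no_zero: "\<And>v. 0 \<le> Re v \<Longrightarrow> p + q * v \<noteq> 0"
    and u: "0 \<le> Re u"
  shows "cmod (r + s * u) \<le> cmod (p + q * u)"
proof (cases "q = 0")
  case True
  then show ?thesis using slope axis[of 0] by simp
next
  case False
  define l where "l = Re (p * cnj q) - Re (r * cnj s)"
  have diff_ge: "(cmod (p + q * v))\<^sup>2 - (cmod (r + s * v))\<^sup>2 \<ge> 2 * l * Re v" for v
  proof -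
    have "(cmod (r + s * Complex 0 (Im v)))\<^sup>2 \<le> (cmod (p + q * Complex 0 (Im v)))\<^sup>2"
      using axis by (intro power_mono) auto
    moreover have "((cmod q)\<^sup>2 - (cmod s)\<^sup>2) * (Re v)\<^sup>2 \<ge> 0"
      using slope by (simp add: power_mono)
    ultimately show ?thesis
      using norm_affine_sq_diff[of p q "Re v" "Im v" r s] unfolding l_def complex_surj
      by linarith
  qed
  define z where "z = - p / q"
  have "p + q * z = 0" using False by (simp add: z_def)
  then have "Re z < 0" using no_zero[of z] by force
  moreover have "2 * l * Re z \<le> - (cmod (r + s * z))\<^sup>2"
    using diff_ge[of z] \<open>p + q * z = 0\<close> by simp
  ultimately have "l \<ge> 0" by (smt (verit) mult_le_0_iff zero_le_power2)
  with u have "0 \<le> 2 * l * Re u" by simp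
  with diff_ge[of u] have "(cmod (r + s * u))\<^sup>2 \<le> (cmod (p + q * u))\<^sup>2" by linarith
  then show ?thesis by (rule power2_le_imp_le) simp
qed

lemma norm_one_minus_le_norm_one_plus:
  fixes u :: complex
  assumes "0 \<le> Re u"
  shows "cmod (1 - u) \<le> cmod (1 + u)"
proof -
  have "(cmod (1 - u))\<^sup>2 \<le> (cmod (1 + u))\<^sup>2"
    using assms unfolding cmod_power2 by (simp add: power2_eq_square algebra_simps)
  then show ?thesis by (rule power2_le_imp_le) simp
qed

text \<open>Induction on the set \<open>J\<close> of variables allowed off the imaginary axis; on the axis the two
  sides are complex conjugates, and each new variable is handled by the affine maximum principle.\<close>

lemma norm_prod_one_minus_sub_le_aux:
  fixes I J :: "'a set" and c :: real and u :: "'a \<Rightarrow> complex"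
  assumes avoid: "\<And>v. \<forall>i\<in>I. 0 \<le> Re (v i) \<Longrightarrow> (\<Prod>i\<in>I. 1 + v i) \<noteq> of_real c"
    and "finite I" and "finite J"
    and "\<forall>i\<in>I. 0 \<le> Re (u i)" and "\<forall>i\<in>I - J. Re (u i) = 0"
  shows "cmod ((\<Prod>i\<in>I. 1 - u i) - of_real c) \<le> cmod ((\<Prod>i\<in>I. 1 + u i) - of_real c)"
  using \<open>finite J\<close> assms(4,5)
proof (induction J arbitrary: u rule: finite_induct)
  case empty
  then have "(\<Prod>i\<in>I. 1 - u i) = (\<Prod>i\<in>I. cnj (1 + u i))"
    by (intro prod.cong) (auto simp: complex_eq_iff)
  then have "(\<Prod>i\<in>I. 1 - u i) - of_real c = cnj ((\<Prod>i\<in>I. 1 + u i) - of_real c)"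
    by simp
  then show ?case by (simp only: complex_mod_cnj)
next
  case (insert j J)
  show ?case
  proof (cases "j \<in> I")
    case False
    then show ?thesis using insert by blast
  next
    case True
    define A where "A = (\<Prod>i\<in>I - {j}. 1 + u i)"
    define B where "B = (\<Prod>i\<in>I - {j}. 1 - u i)"
    have "(\<Prod>i\<in>I - {j}. f ((u(j := v)) i)) = (\<Prod>i\<in>I - {j}. f (u i))" for f v
      by (intro prod.cong) auto
    then have "(\<Prod>i\<in>I. f ((u(j := v)) i)) = f v * (\<Prod>i\<in>I - {j}. f (u i))" for f v
      using prod.remove[OF \<open>finite I\<close> True, of "\<lambda>i. f ((u(j := v)) i)"] by simp
    from this[of "\<lambda>z. 1 + z"] this[of "\<lambda>z. 1 - z"]
    have split_plus: "(\<Prod>i\<in>I. 1 + (u(j := v)) i) - of_real c = (A - of_real c) + A * v"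
      and split_minus: "(\<Prod>i\<in>I. 1 - (u(j := v)) i) - of_real c = (B - of_real c) + (- B) * v"
      for v by (simp_all add: A_def B_def algebra_simps)
    have "cmod ((B - of_real c) + (- B) * u j) \<le> cmod ((A - of_real c) + A * u j)"
    proof (rule norm_affine_le_on_right_halfplane)
      have "cmod B = (\<Prod>i\<in>I - {j}. cmod (1 - u i))" by (simp add: B_def prod_norm)
      also have "\<dots> \<le> (\<Prod>i\<in>I - {j}. cmod (1 + u i))"
        using insert.prems by (intro prod_mono) (auto intro: norm_one_minus_le_norm_one_plus)
      also have "\<dots> = cmod A" by (simp add: A_def prod_norm)
      finally show "cmod (- B) \<le> cmod A" by simp
    next
      fix y
      have "\<forall>i\<in>I. 0 \<le> Re ((u(j := Complex 0 y)) i)" "\<forall>i\<in>I - J. Re ((u(j := Complex 0 y)) i) = 0"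
        using insert.prems by auto
      from insert.IH[OF this]
      show "cmod (B - of_real c + - B * Complex 0 y) \<le> cmod (A - of_real c + A * Complex 0 y)"
        unfolding split_plus split_minus .
    next
      fix v :: complex
      assume "0 \<le> Re v"
      then have "(\<Prod>i\<in>I. 1 + (u(j := v)) i) \<noteq> of_real c"
        using insert.prems by (intro avoid) auto
      then show "A - of_real c + A * v \<noteq> 0"
        using split_plus[of v] by (simp add: diff_add_eq)
    next
      show "0 \<le> Re (u j)" using insert.prems True by auto
    qed
    then have "cmod ((\<Prod>i\<in>I. 1 - (u(j := u j)) i) - of_real c)
             \<le> cmod ((\<Prod>i\<in>I. 1 + (u(j := u j)) i) - of_real c)"
      unfolding split_plus split_minus .
    then show ?thesis by simp
  qed
qed

lemma norm_prod_one_minus_sub_le: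
  fixes I :: "'a set" and c :: real and u :: "'a \<Rightarrow> complex"
  assumes "\<And>v. \<forall>i\<in>I. 0 \<le> Re (v i) \<Longrightarrow> (\<Prod>i\<in>I. 1 + v i) \<noteq> of_real c"
    and "finite I" and "\<forall>i\<in>I. 0 \<le> Re (u i)"
  shows "cmod ((\<Prod>i\<in>I. 1 - u i) - of_real c) \<le> cmod ((\<Prod>i\<in>I. 1 + u i) - of_real c)"
  using norm_prod_one_minus_sub_le_aux[OF assms(1,2,2,3)] by simp

lemma concave_on_cos: "concave_on {-(pi/2)..pi/2} cos"
proof (rule f''_le0_imp_concave[where f' = "\<lambda>x. - sin x" and f'' = "\<lambda>x. - cos x"])
  fix x :: real
  show "DERIV cos x :> - sin x" "DERIV (\<lambda>x. - sin x) x :> - cos x"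
    by (auto intro!: derivative_eq_intros)
  assume "x \<in> {-(pi/2)..pi/2}"
  then show "- cos x \<le> 0" by (simp add: cos_ge_zero)
qed simp

text \<open>Jensen's inequality for the concave \<open>cos\<close>, followed by AM-GM.\<close>

lemma prod_cos_le_cos_mean_power:
  fixes I :: "'a set" and \<phi> :: "'a \<Rightarrow> real"
  assumes "finite I" and "I \<noteq> {}" and bounded: "\<forall>i\<in>I. \<bar>\<phi> i\<bar> < pi/2"
  shows "(\<Prod>i\<in>I. cos (\<phi> i)) \<le> cos ((\<Sum>i\<in>I. \<phi> i) / card I) ^ card I"
proof -
  define n where "n = card I"
  define P where "P = (\<Prod>i\<in>I. cos (\<phi> i))"
  have "n > 0" using assms by (simp add: n_def card_gt_0_iff)
  have cos_pos: "\<forall>i\<in>I. cos (\<phi> i) > 0" using bounded by (auto intro!: cos_gt_zero_pi)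
  then have "P > 0" by (simp add: P_def prod_pos)
  have "P powr (1 / n) \<le> (\<Sum>i\<in>I. cos (\<phi> i) / n)"
    unfolding P_def n_def using cos_pos by (intro arith_geom_mean[OF assms(1,2)]) auto
  also have "\<dots> = (\<Sum>i\<in>I. (1 / real n) * cos (\<phi> i))" by simp
  also have "\<dots> \<le> cos (\<Sum>i\<in>I. (1 / real n) *\<^sub>R \<phi> i)"
    using \<open>n > 0\<close> bounded
    by (intro concave_on_sum[OF assms(1,2) concave_on_cos]) (auto simp: n_def)
  also have "\<dots> = cos ((\<Sum>i\<in>I. \<phi> i) / n)" by (simp add: sum_divide_distrib)
  finally have "(P powr (1 / n)) ^ n \<le> cos ((\<Sum>i\<in>I. \<phi> i) / n) ^ n"
    by (intro power_mono) simp_all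
  also have "(P powr (1 / n)) ^ n = P"
    using \<open>P > 0\<close> \<open>n > 0\<close> by (simp add: powr_realpow [symmetric] powr_powr)
  finally show ?thesis by (simp add: P_def n_def)
qed

lemma prod_cos_le_cos_pi_div_power:
  fixes I :: "'a set" and \<phi> :: "'a \<Rightarrow> real"
  assumes "finite I" and "I \<noteq> {}" and bounded: "\<forall>i\<in>I. \<bar>\<phi> i\<bar> < pi/2"
    and sum_ge: "pi \<le> \<bar>\<Sum>i\<in>I. \<phi> i\<bar>"
  shows "(\<Prod>i\<in>I. cos (\<phi> i)) \<le> cos (pi / card I) ^ card I"
proof -
  define n where "n = card I"
  define S where "S = (\<Sum>i\<in>I. \<phi> i)"
  have "n > 0" using assms by (simp add: n_def card_gt_0_iff)
  have "\<bar>S\<bar> \<le> (\<Sum>i\<in>I. \<bar>\<phi> i\<bar>)" unfolding S_def by (rule sum_abs)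
  also have "\<dots> < n * (pi/2)"
    using sum_strict_mono[OF assms(1,2), of "\<lambda>i. \<bar>\<phi> i\<bar>" "\<lambda>_. pi/2"] bounded
    by (simp add: n_def)
  finally have "\<bar>S\<bar> / n < pi / 2" using \<open>n > 0\<close> by (simp add: divide_simps mult.commute)
  moreover have "pi / n \<le> \<bar>S\<bar> / n" using sum_ge by (simp add: S_def divide_right_mono)
  moreover have "0 \<le> \<bar>S\<bar> / n" by simp
  ultimately have "cos (\<bar>S\<bar> / n) \<le> cos (pi / n)" "0 \<le> cos (\<bar>S\<bar> / n)"
    by (intro cos_monotone_0_pi_le cos_ge_zero; simp; linarith)+
  moreover have "cos (S / n) = cos (\<bar>S\<bar> / n)"
    by (metis abs_divide abs_of_nat cos_abs_real)
  ultimately have "cos (S / n) ^ n \<le> cos (pi / n) ^ n"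
    by (simp add: power_mono)
  with prod_cos_le_cos_mean_power[OF assms(1-3)] show ?thesis by (simp add: S_def n_def)
qed

lemma prod_cis: "finite I \<Longrightarrow> (\<Prod>i\<in>I. cis (f i)) = cis (\<Sum>i\<in>I. f i)"
  by (induction I rule: finite_induct) (auto simp: cis_mult)

lemma one_plus_polar:
  fixes v :: complex
  assumes "0 \<le> Re v"
  obtains \<phi> where "\<bar>\<phi>\<bar> < pi/2" and "1 + v = of_real ((1 + Re v) / cos \<phi>) * cis \<phi>"
proof
  define \<phi> where "\<phi> = arctan (Im v / (1 + Re v))"
  show "\<bar>\<phi>\<bar> < pi/2" using arctan_bounded[of "Im v / (1 + Re v)"] by (auto simp: \<phi>_def)
  then have "cos \<phi> > 0" by (intro cos_gt_zero_pi) auto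
  moreover have "sin \<phi> / cos \<phi> = Im v / (1 + Re v)"
    using tan_arctan[of "Im v / (1 + Re v)"] by (simp add: \<phi>_def tan_def)
  ultimately show "1 + v = of_real ((1 + Re v) / cos \<phi>) * cis \<phi>"
    using assms by (simp add: complex_eq_iff field_simps)
qed

text \<open>In polar form \<open>1 + v i = \<rho> i cis (\<phi> i)\<close> with \<open>\<rho> i cos (\<phi> i) \<ge> 1\<close>, a real negative
  product needs \<open>\<bar>\<Sum>i\<in>I. \<phi> i\<bar> \<ge> pi\<close>, which makes \<open>\<Prod>i\<in>I. cos (\<phi> i)\<close> small and the
  modulus of the product large.\<close>

lemma prod_one_plus_ne_real:
  fixes I :: "'a set" and c :: real and v :: "'a \<Rightarrow> complex"
  assumes "finite I" and "I \<noteq> {}" and Re_nonneg: "\<forall>i\<in>I. 0 \<le> Re (v i)"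
    and "c < 1" and "1 + c * cos (pi / card I) ^ card I > 0"
  shows "(\<Prod>i\<in>I. 1 + v i) \<noteq> of_real c"
proof
  assume prod_eq: "(\<Prod>i\<in>I. 1 + v i) = of_real c"
  have "\<forall>i\<in>I. \<exists>\<phi>. \<bar>\<phi>\<bar> < pi/2 \<and> 1 + v i = of_real ((1 + Re (v i)) / cos \<phi>) * cis \<phi>"
    using one_plus_polar Re_nonneg by blast
  then obtain \<phi> where bounded: "\<forall>i\<in>I. \<bar>\<phi> i\<bar> < pi/2"
    and polar: "\<forall>i\<in>I. 1 + v i = of_real ((1 + Re (v i)) / cos (\<phi> i)) * cis (\<phi> i)"
    by (auto dest!: bchoice)
  define R where "R = (\<Prod>i\<in>I. (1 + Re (v i)) / cos (\<phi> i))"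
  define S where "S = (\<Sum>i\<in>I. \<phi> i)"
  define C where "C = (\<Prod>i\<in>I. cos (\<phi> i))"
  have "C > 0" unfolding C_def using bounded by (auto intro!: prod_pos cos_gt_zero_pi)
  have "C \<le> 1" unfolding C_def by (rule prod_le_1) (use bounded in \<open>auto intro!: cos_ge_zero\<close>)
  have "R = (\<Prod>i\<in>I. 1 + Re (v i)) / C" by (simp add: R_def C_def prod_dividef)
  moreover have "(\<Prod>i\<in>I. 1 + Re (v i)) \<ge> 1" using Re_nonneg by (intro prod_ge_1) auto
  ultimately have R_ge: "R \<ge> 1 / C" using \<open>C > 0\<close> by (simp add: divide_right_mono)
  moreover have "1 / C \<ge> 1" using \<open>C > 0\<close> \<open>C \<le> 1\<close> by simp
  ultimately have "R \<ge> 1" by linarith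
  have "of_real c = (\<Prod>i\<in>I. 1 + v i)" using prod_eq ..
  also have "\<dots> = (\<Prod>i\<in>I. of_real ((1 + Re (v i)) / cos (\<phi> i)) * cis (\<phi> i))"
    using polar by (intro prod.cong) auto
  also have "\<dots> = of_real R * cis S"
    unfolding prod.distrib R_def S_def of_real_prod prod_cis[OF \<open>finite I\<close>] ..
  finally have polar_c: "of_real c = of_real R * cis S" .
  then have c_polar: "c = R * cos S" by (simp add: complex_eq_iff)
  have "\<bar>c\<bar> = R"
    using arg_cong[OF polar_c, of cmod] \<open>R \<ge> 1\<close> by (simp add: norm_mult)
  then have "c = - R" using \<open>c < 1\<close> \<open>R \<ge> 1\<close> by linarith
  then have "R * cos S = R * (-1)" using c_polar by simp
  then have "cos S = -1" using \<open>R \<ge> 1\<close> by (subst (asm) mult_left_cancel) auto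
  have "pi \<le> \<bar>S\<bar>"
  proof (rule ccontr)
    assume "\<not> pi \<le> \<bar>S\<bar>"
    then have "cos pi < cos \<bar>S\<bar>" by (intro cos_monotone_0_pi) auto
    with \<open>cos S = -1\<close> show False by simp
  qed
  then have "C \<le> cos (pi / card I) ^ card I"
    unfolding C_def S_def by (rule prod_cos_le_cos_pi_div_power[OF assms(1,2) bounded])
  then have "c * cos (pi / card I) ^ card I \<le> c * C"
    using \<open>c = - R\<close> \<open>R \<ge> 1\<close> by (simp add: mult_left_mono_neg)
  also have "\<dots> \<le> -1" using \<open>c = - R\<close> R_ge \<open>C > 0\<close> by (simp add: field_simps)
  finally show False using assms(5) by simp
qed

lemma Re_cayley_nonneg:
  fixes w :: complex
  assumes "1 \<le> cmod w" and "w \<noteq> -1"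
  shows "0 \<le> Re ((w - 1) / (w + 1))"
proof -
  have "1 \<le> (cmod w)\<^sup>2" using assms(1) by (simp add: one_le_power)
  then have "1 \<le> (Re w)\<^sup>2 + (Im w)\<^sup>2" by (simp add: cmod_power2)
  then have "0 \<le> (Re w - 1) * (Re w + 1) + Im w * Im w"
    by (simp add: algebra_simps power2_eq_square)
  then show ?thesis by (simp add: Re_divide)
qed

lemma
  fixes w :: "'a \<Rightarrow> complex" and I :: "'a set"
  assumes "\<forall>i\<in>I. w i \<noteq> -1"
  shows prod_one_plus_cayley:
      "(\<Prod>i\<in>I. 1 + (w i - 1) / (w i + 1)) = 2 ^ card I * (\<Prod>i\<in>I. w i) / (\<Prod>i\<in>I. 1 + w i)"
    and prod_one_minus_cayley:
      "(\<Prod>i\<in>I. 1 - (w i - 1) / (w i + 1)) = 2 ^ card I / (\<Prod>i\<in>I. 1 + w i)"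
proof -
  have nz: "\<forall>i\<in>I. 1 + w i \<noteq> 0" using assms by (metis add.commute add_eq_0_iff)
  have "(\<Prod>i\<in>I. 1 + (w i - 1) / (w i + 1)) = (\<Prod>i\<in>I. 2 * w i / (1 + w i))"
    by (rule prod.cong) (use nz in \<open>auto simp: field_simps\<close>)
  also have "\<dots> = (\<Prod>i\<in>I. 2 * w i) / (\<Prod>i\<in>I. 1 + w i)" by (rule prod_dividef)
  finally show "(\<Prod>i\<in>I. 1 + (w i - 1) / (w i + 1)) = 2 ^ card I * (\<Prod>i\<in>I. w i) / (\<Prod>i\<in>I. 1 + w i)"
    by (simp add: prod.distrib)
  have "(\<Prod>i\<in>I. 1 - (w i - 1) / (w i + 1)) = (\<Prod>i\<in>I. 2 / (1 + w i))"
    by (rule prod.cong) (use nz in \<open>auto simp: field_simps\<close>)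
  also have "\<dots> = (\<Prod>i\<in>I. 2) / (\<Prod>i\<in>I. 1 + w i)" by (rule prod_dividef)
  finally show "(\<Prod>i\<in>I. 1 - (w i - 1) / (w i + 1)) = 2 ^ card I / (\<Prod>i\<in>I. 1 + w i)"
    by simp
qed

lemma rescale_by_cayley_product:
  fixes b c P t :: complex and m :: nat
  assumes "P \<noteq> 0" and "c * (1 - b) = - b * 2 ^ m"
  shows "b * P + (1 - b) * t = (1 - b) * P / 2 ^ m * (2 ^ m * t / P - c)"
proof -
  have "(1 - b) * P / 2 ^ m * c = c * (1 - b) * P / 2 ^ m" by simp
  also have "\<dots> = - b * P" using assms(2) by simp
  finally show ?thesis using assms(1) by (simp add: right_diff_distrib)
qed

lemma ising_cofactor_bounds:
  fixes I :: "'a set" and \<beta> c :: real and w :: "'a \<Rightarrow> complex"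
  assumes "finite I" and "I \<noteq> {}" and "\<beta> < 1"
    and c_eq: "c = - \<beta> * 2 ^ card I / (1 - \<beta>)" and "c < 1"
    and "1 + c * cos (pi / card I) ^ card I > 0"
    and w_ge: "\<forall>i\<in>I. 1 \<le> cmod (w i)"
  defines "X \<equiv> of_real \<beta> * (\<Prod>i\<in>I. 1 + w i) + of_real (1 - \<beta>) * (\<Prod>i\<in>I. w i)"
    and "Y \<equiv> of_real \<beta> * (\<Prod>i\<in>I. 1 + w i) + of_real (1 - \<beta>)"
  shows "cmod Y \<le> cmod X \<and> X \<noteq> 0"
proof -
  have "1 \<le> (\<Prod>i\<in>I. cmod (w i))" using w_ge by (intro prod_ge_1) auto
  then have "1 \<le> cmod (\<Prod>i\<in>I. w i)" by (simp add: prod_norm)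
  consider (pole) "\<exists>i\<in>I. w i = -1" | (regular) "\<forall>i\<in>I. w i \<noteq> -1" by blast
  then show ?thesis
  proof cases
    case pole
    then have "(\<Prod>i\<in>I. 1 + w i) = 0" using \<open>finite I\<close> by (force simp: prod_zero_iff)
    then show ?thesis
      using \<open>1 \<le> cmod (\<Prod>i\<in>I. w i)\<close> \<open>\<beta> < 1\<close> by (auto simp: X_def Y_def norm_mult)
  next
    case regular
    define u where "u i = (w i - 1) / (w i + 1)" for i
    define P where "P = (\<Prod>i\<in>I. 1 + w i)"
    define \<kappa> where "\<kappa> = (1 - of_real \<beta>) * P / 2 ^ card I"
    have "P \<noteq> 0"
      using regular \<open>finite I\<close> by (auto simp: P_def prod_zero_iff add_eq_0_iff)
    then have "\<kappa> \<noteq> 0" using \<open>\<beta> < 1\<close> by (simp add: \<kappa>_def)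
    have u_Re: "\<forall>i\<in>I. 0 \<le> Re (u i)"
      using w_ge regular by (simp add: u_def Re_cayley_nonneg)
    have "c * (1 - \<beta>) = - \<beta> * 2 ^ card I" using \<open>\<beta> < 1\<close> by (simp add: c_eq)
    then have "of_real c * (1 - of_real \<beta>) = - of_real \<beta> * (2 :: complex) ^ card I"
      by (metis of_real_1 of_real_diff of_real_minus of_real_mult of_real_numeral of_real_power)
    note rescale = rescale_by_cayley_product[OF \<open>P \<noteq> 0\<close> this, folded \<kappa>_def]
    have X_eq: "X = \<kappa> * ((\<Prod>i\<in>I. 1 + u i) - of_real c)"
      using rescale[of "\<Prod>i\<in>I. w i"] prod_one_plus_cayley[OF regular]
      unfolding X_def P_def u_def by simp
    have Y_eq: "Y = \<kappa> * ((\<Prod>i\<in>I. 1 - u i) - of_real c)"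
      using rescale[of 1] prod_one_minus_cayley[OF regular]
      unfolding Y_def P_def u_def by simp
    have avoid: "(\<Prod>i\<in>I. 1 + v i) \<noteq> of_real c" if "\<forall>i\<in>I. 0 \<le> Re (v i)" for v
      using prod_one_plus_ne_real assms(1,2,5,6) that by blast
    show ?thesis
      using norm_prod_one_minus_sub_le[OF avoid \<open>finite I\<close> u_Re] avoid[OF u_Re] \<open>\<kappa> \<noteq> 0\<close>
      unfolding X_eq Y_eq norm_mult by (simp add: mult_left_mono)
  qed
qed

lemma activity_range_consequences:
  fixes k :: nat and \<beta> :: real
  assumes "k \<ge> 2"
    and range: "(k = 2 \<and> -1 < \<beta> \<and> \<beta> < 1) \<or>
         (k \<ge> 3 \<and> - 1 / (2 ^ (k - 1) - 1) < \<beta> \<and>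
          \<beta> < 1 / (2 ^ (k - 1) * cos (pi / real (k - 1)) ^ (k - 1) + 1))"
  defines "c \<equiv> - \<beta> * 2 ^ (k - 1) / (1 - \<beta>)"
  shows "\<beta> < 1 \<and> c < 1 \<and> 1 + c * cos (pi / real (k - 1)) ^ (k - 1) > 0"
proof (cases "k = 2")
  case True
  with range have "-1 < \<beta>" "\<beta> < 1" by auto
  then show ?thesis using True by (simp add: c_def divide_simps)
next
  case False
  define m where "m = k - 1"
  define C where "C = cos (pi / real m) ^ m"
  have "m \<ge> 2" using False \<open>k \<ge> 2\<close> by (simp add: m_def)
  with range False have lower: "- 1 / (2 ^ m - 1) < \<beta>" and upper: "\<beta> < 1 / (2 ^ m * C + 1)"
    by (auto simp: m_def C_def)
  have "pi / real m \<le> pi / 2" using \<open>m \<ge> 2\<close> by (intro divide_left_mono) auto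
  moreover have "0 \<le> pi / real m" by simp
  ultimately have "C \<ge> 0" unfolding C_def by (intro zero_le_power cos_ge_zero) linarith+
  then have "1 \<le> 2 ^ m * C + 1" by simp
  then have "\<beta> * (2 ^ m * C + 1) < 1" and "\<beta> < 1"
    using upper by (simp_all add: less_divide_eq order.strict_trans2[OF upper])
  have "(2::real) ^ m \<ge> 2 ^ 2" using \<open>m \<ge> 2\<close> by (intro power_increasing) auto
  then have pos: "0 < (2::real) ^ m - 1" by simp
  from mult_strict_right_mono[OF lower pos] have "-1 < \<beta> * (2 ^ m - 1)" using pos by simp
  have c: "c = - \<beta> * 2 ^ m / (1 - \<beta>)" by (simp add: c_def m_def)
  have "c < 1" unfolding c using \<open>\<beta> < 1\<close> \<open>-1 < \<beta> * (2 ^ m - 1)\<close>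
    by (simp add: divide_simps algebra_simps)
  moreover have "1 + c * C = (1 - \<beta> * (2 ^ m * C + 1)) / (1 - \<beta>)"
    unfolding c using \<open>\<beta> < 1\<close> by (simp add: field_simps)
  then have "1 + c * C > 0" using \<open>\<beta> < 1\<close> \<open>\<beta> * (2 ^ m * C + 1) < 1\<close> by simp
  ultimately show ?thesis using \<open>\<beta> < 1\<close> by (simp add: C_def m_def)
qed

lemma ising_edge_split:
  assumes "j \<in> {1..k}"
  defines "I \<equiv> {1..k} - {j}"
  shows "ising_edge k \<beta> w
       = w j * (of_real \<beta> * (\<Prod>i\<in>I. 1 + w i) + of_real (1 - \<beta>) * (\<Prod>i\<in>I. w i))
         + (of_real \<beta> * (\<Prod>i\<in>I. 1 + w i) + of_real (1 - \<beta>))"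
proof -
  have "(\<Prod>i\<in>{1..k}. f i) = f j * (\<Prod>i\<in>I. f i)" for f :: "nat \<Rightarrow> complex"
    unfolding I_def using assms(1) by (simp add: prod.remove)
  then show ?thesis by (simp add: ising_edge_def algebra_simps)
qed

theorem lemma4p9:
  fixes k :: nat and \<beta> :: real
  assumes "k \<ge> 2"
    and "(k = 2 \<and> -1 < \<beta> \<and> \<beta> < 1) \<or>
         (k \<ge> 3 \<and> - 1 / (2 ^ (k - 1) - 1) < \<beta> \<and>
          \<beta> < 1 / (2 ^ (k - 1) * cos (pi / real (k - 1)) ^ (k - 1) + 1))"
  shows "lee_yang k (ising_edge k \<beta>)"
  unfolding lee_yang_def
proof (intro allI impI notI)
  fix w :: "nat \<Rightarrow> complex"
  assume w: "(\<forall>i\<in>{1..k}. 1 \<le> cmod (w i)) \<and> (\<exists>i\<in>{1..k}. 1 < cmod (w i))"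
    and zero: "ising_edge k \<beta> w = 0"
  then obtain j where j: "j \<in> {1..k}" "1 < cmod (w j)" by blast
  define I where "I = {1..k} - {j}"
  define X where "X = of_real \<beta> * (\<Prod>i\<in>I. 1 + w i) + of_real (1 - \<beta>) * (\<Prod>i\<in>I. w i)"
  define Y where "Y = of_real \<beta> * (\<Prod>i\<in>I. 1 + w i) + complex_of_real (1 - \<beta>)"
  have "card I = k - 1" using j by (simp add: I_def)
  with \<open>k \<ge> 2\<close> have "I \<noteq> {}" by auto
  have "finite I" and "\<forall>i\<in>I. 1 \<le> cmod (w i)" using w by (auto simp: I_def)
  have bounds: "cmod Y \<le> cmod X \<and> X \<noteq> 0"
    unfolding X_def Y_def
    by (rule ising_cofactor_bounds[where c = "- \<beta> * 2 ^ (k - 1) / (1 - \<beta>)"])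
      (use activity_range_consequences[OF assms] \<open>finite I\<close> \<open>I \<noteq> {}\<close> in
        \<open>simp_all add: \<open>card I = k - 1\<close> \<open>\<forall>i\<in>I. 1 \<le> cmod (w i)\<close>\<close>)
  have "ising_edge k \<beta> w = w j * X + Y"
    unfolding X_def Y_def I_def by (rule ising_edge_split[OF j(1)])
  with zero have "w j * X = - Y" by (simp add: eq_neg_iff_add_eq_0)
  have "cmod X < cmod (w j) * cmod X" using j(2) bounds by simp
  also have "\<dots> = cmod Y" using \<open>w j * X = - Y\<close> by (metis norm_minus_cancel norm_mult)
  finally show False using bounds by simp
qed

end
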